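(* Let $I=[s,t]\subseteq\mathbb R/\mathbb Z$ be a generalized dyadic interval. Then: (1) there is a decomposition $I=[s,x]\cup[x,t]$ into two generalized dyadic intervals with $x$ red; (2) if at least one of $s,t$ is red, there is a decomposition $I=[s,x]\cup[x,t]$ into two generalized dyadic intervals with $x$ blue.
   Context: Let $\sigma_2(t)=2t$ on $\mathbb R/\mathbb Z$. An interval $I=[s,t]\subseteq\mathbb R/\mathbb Z$ is generalized dyadic if there is an integer $m\ge0$ such that $\sigma_2^m$ maps the open interval $(s,t)$ homeomorphically onto one of $(0,1)$, $(0,\frac23)$, $(\frac13,\frac23)$, $(\frac13,1)$. A point of $\mathbb R/\mathbb Z$ is colored red if some iterate of $\sigma_2$ maps it to $0$, and blue if some iterate maps it into the $2$-cycle $\{\frac13,\frac23\}$; endpoints of generalized dyadic intervals are red or blue. *)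

theory Defs
  imports "HOL-Analysis.Analysis"
begin

text \<open>The circle R/Z is realised as the unit circle in the complex plane via
  x \<mapsto> exp(2 pi i x).  Points are given by real lifts.\<close>

definition circ :: "real \<Rightarrow> complex" where
  "circ x = cis (2 * pi * x)"

text \<open>The doubling map sigma_2 (t \<mapsto> 2t on R/Z) is z \<mapsto> z^2 on the circle.\<close>
definition sigma2 :: "complex \<Rightarrow> complex" where
  "sigma2 z = z ^ 2"

text \<open>The open arc (s,t) of R/Z, for real lifts s < t with t - s \<le> 1
  (the arc traversed in the positive direction from s to t).\<close>
definition open_arc :: "real \<Rightarrow> real \<Rightarrow> complex set" where
  "open_arc s t = circ ` {s<..<t}"

definition gen_dyadic :: "real \<Rightarrow> real \<Rightarrow> bool" where
  "gen_dyadic s t \<longleftrightarrow> s < t \<and> t - s \<le> 1 \<and>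
     (\<exists>m::nat. \<exists>(a, b) \<in> {(0, 1), (0, 2/3), (1/3, 2/3), (1/3, 1::real)}.
        \<exists>g. homeomorphism (open_arc s t) (open_arc a b) (sigma2 ^^ m) g)"

definition red :: "real \<Rightarrow> bool" where
  "red x \<longleftrightarrow> (\<exists>n::nat. (sigma2 ^^ n) (circ x) = circ 0)"

definition blue :: "real \<Rightarrow> bool" where
  "blue x \<longleftrightarrow> (\<exists>n::nat. (sigma2 ^^ n) (circ x) \<in> {circ (1/3), circ (2/3)})"

end

theory Submission
  imports Defs
begin

text \<open>Lifted to the reals, \<open>\<sigma>\<^sub>2\<^sup>m\<close> is \<open>x \<mapsto> 2\<^sup>m x\<close>. An open arc of length at most 1
  determines its endpoints modulo \<open>\<int>\<close>, so \<open>[s,t]\<close> is generalized dyadic exactly when it is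
  a pullback \<open>[(a + k)/2\<^sup>m, (b + k)/2\<^sup>m]\<close> of one of the four model intervals \<open>[a,b]\<close>.
  Pullbacks preserve both colours and generalized dyadic intervals, so it suffices to split
  the models: each splits at the red point \<open>1/2\<close>, and all but \<open>[1/3,2/3]\<close> split at a blue
  point \<open>1/3\<close> or \<open>2/3\<close>. The endpoints of a pullback of \<open>[1/3,2/3]\<close> are blue, and no
  point is both red and blue because \<open>0\<close> is fixed while \<open>{1/3,2/3}\<close> is invariant.\<close>

lemma circ_eq_iff: "circ x = circ y \<longleftrightarrow> x - y \<in> \<int>"
proof -
  have "circ x = circ y \<longleftrightarrow> sin (2*pi*x) = sin (2*pi*y) \<and> cos (2*pi*x) = cos (2*pi*y)"
    by (auto simp: circ_def complex_eq_iff)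
  also have "\<dots> \<longleftrightarrow> (\<exists>n::int. 2*pi*x = 2*pi*y + 2*pi*n)"
    by (rule sin_cos_eq_iff)
  also have "\<dots> \<longleftrightarrow> (\<exists>n::int. x - y = n)"
  proof (intro ex_cong1)
    fix n :: int
    have "2*pi*x = 2*pi*y + 2*pi*n \<longleftrightarrow> (2*pi) * x = (2*pi) * (y + n)"
      by (simp add: distrib_left)
    then show "2*pi*x = 2*pi*y + 2*pi*n \<longleftrightarrow> x - y = n"
      by auto
  qed
  finally show ?thesis
    by (auto simp: Ints_def)
qed

lemma sigma2_circ: "sigma2 (circ x) = circ (2 * x)"
  unfolding sigma2_def circ_def Complex.DeMoivre by (simp add: mult_ac)

lemma sigma2_iterate_circ: "(sigma2 ^^ m) (circ x) = circ (2 ^ m * x)"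
  by (induction m) (simp_all add: sigma2_circ mult_ac)

lemma sigma2_iterate_circ_pullback:
  "(sigma2 ^^ m) (circ ((u + of_int k) / 2 ^ m)) = circ u"
  by (simp add: sigma2_iterate_circ circ_eq_iff)

lemma circ_mem_open_arc_iff:
  assumes "0 < l"
  shows "circ y \<in> open_arc a (a + l) \<longleftrightarrow> (0 < frac (y - a) \<and> frac (y - a) < l) \<or> 1 < l"
proof
  assume "circ y \<in> open_arc a (a + l)"
  then obtain z where z: "a < z" "z < a + l" "circ y = circ z"
    by (auto simp: open_arc_def)
  show "(0 < frac (y - a) \<and> frac (y - a) < l) \<or> 1 < l"
  proof (cases "1 < l")
    case False
    have "(y - a) - (z - a) \<in> \<int>"
      using z(3) by (simp add: circ_eq_iff)
    then have "frac (y - a) = z - a"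
      using z False by (simp add: frac_unique_iff)
    then show ?thesis using z by simp
  qed simp
next
  assume "(0 < frac (y - a) \<and> frac (y - a) < l) \<or> 1 < l"
  then obtain z where z: "0 < z" "z < l" "y - a - z \<in> \<int>"
  proof (elim disjE conjE)
    assume "0 < frac (y - a)" "frac (y - a) < l"
    then show thesis
      by (intro that[of "frac (y - a)"]) (auto simp: frac_def)
  next
    assume "1 < l"
    have "y - a - (1 - frac (a - y)) = of_int (- \<lfloor>a - y\<rfloor> - 1)"
      by (simp add: frac_def)
    moreover have "0 < 1 - frac (a - y)" "1 - frac (a - y) < l"
      using \<open>1 < l\<close> frac_lt_1[of "a - y"] frac_ge_0[of "a - y"] by linarith+
    ultimately show thesis
      by (metis that Ints_of_int)
  qed
  then have "circ y = circ (a + z)"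
    by (simp add: circ_eq_iff algebra_simps)
  then show "circ y \<in> open_arc a (a + l)"
    using z by (auto simp: open_arc_def)
qed

lemma frac_interval_eqD:
  fixes A a L l :: real
  assumes mem: "\<And>y. 0 < frac (y - A) \<and> frac (y - A) < L \<longleftrightarrow> 0 < frac (y - a) \<and> frac (y - a) < l"
    and "0 < L" "L \<le> 1" "0 < l" "l \<le> 1"
  shows "L = l \<and> A - a \<in> \<int>"
proof -
  define d where "d = frac (A - a)"
  have d: "0 \<le> d" "d < 1"
    by (simp_all add: d_def frac_lt_1)
  have "d = 0"
  proof (rule ccontr)
    assume "d \<noteq> 0"
    then have "l \<le> d"
      using mem[of A] by (auto simp: d_def)
    define e where "e = min L (1 - d) / 2"
    have e: "0 < e" "e < L" "d + e < 1"
      using \<open>0 < L\<close> d unfolding e_def min_def by (auto simp: field_simps)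
    have "0 < frac (A + e - A) \<and> frac (A + e - A) < L"
      using e \<open>L \<le> 1\<close> by (simp add: frac_eq)
    then have "frac (A + e - a) < l"
      using mem[of "A + e"] by blast
    moreover have "frac (A + e - a) = frac (d + e)"
      by (simp add: d_def diff_add_eq [symmetric] add.commute)
    moreover have "frac (d + e) = d + e"
      using d e by (simp add: frac_eq)
    ultimately show False
      using e \<open>l \<le> d\<close> by linarith
  qed
  then have "A - a \<in> \<int>"
    by (simp add: d_def)
  have "L = l"
  proof (rule ccontr)
    assume "L \<noteq> l"
    define z where "z = min L l"
    have "frac (A + z - a) = z" "frac (A + z - A) = z" "0 < z"
      using \<open>A - a \<in> \<int>\<close> \<open>L \<noteq> l\<close> assms(2-5)
      by (auto simp: z_def frac_eq frac_add_int_left diff_add_eq [symmetric] add.commute)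
    then show False
      using mem[of "A + z"] \<open>L \<noteq> l\<close> by (auto simp: z_def)
  qed
  with \<open>A - a \<in> \<int>\<close> show ?thesis
    by simp
qed

lemma open_arc_eqD:
  assumes "open_arc A (A + L) = open_arc a (a + l)"
    and "0 < L" "0 < l" "l \<le> 1"
  shows "L = l \<and> A - a \<in> \<int>"
proof -
  have mem: "(0 < frac (y - A) \<and> frac (y - A) < L) \<or> 1 < L
      \<longleftrightarrow> 0 < frac (y - a) \<and> frac (y - a) < l" for y
    using assms circ_mem_open_arc_iff[of L y A] circ_mem_open_arc_iff[of l y a] by auto
  have "L \<le> 1"
    using mem[of a] by auto
  with mem assms show ?thesis
    by (intro frac_interval_eqD) auto
qed

text \<open>Rotating \<open>circ a\<close> to \<open>-1\<close> moves the branch cut of \<^const>\<open>Arg\<close> to \<open>circ a\<close>, so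
  \<open>arc_lift a\<close> is a continuous inverse of \<^const>\<open>circ\<close> on \<open>{a<..<a + 1}\<close>.\<close>

definition arc_lift :: "real \<Rightarrow> complex \<Rightarrow> real" where
  "arc_lift a w = a + 1/2 + Arg (- (w / circ a)) / (2 * pi)"

lemma minus_circ_divide_circ: "- (circ y / circ a) = cis (2 * pi * (y - a) - pi)"
  unfolding circ_def cis_divide minus_cis' by (simp add: algebra_simps)

lemma cis_notin_nonpos_Reals:
  assumes "- pi < \<theta>" "\<theta> < pi"
  shows "cis \<theta> \<notin> \<real>\<^sub>\<le>\<^sub>0"
proof
  assume "cis \<theta> \<in> \<real>\<^sub>\<le>\<^sub>0"
  then have "Re (cis \<theta>) < 0 \<and> Im (cis \<theta>) = 0"
    by (metis complex_nonpos_Reals_iff complex_eq_iff cis_neq_zero zero_complex.simps order_le_less)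
  then have "Arg (cis \<theta>) = pi"
    by (simp add: Arg_eq_pi)
  with assms show False
    by (simp add: Arg_cis)
qed

lemma arc_lift_circ:
  assumes "a < y" "y < a + 1"
  shows "arc_lift a (circ y) = y"
proof -
  have "Arg (cis (2 * pi * (y - a) - pi)) = 2 * pi * (y - a) - pi"
    using assms by (intro Arg_cis) auto
  then show ?thesis
    by (simp add: arc_lift_def minus_circ_divide_circ field_simps)
qed

lemma homeomorphism_circ_open_arc:
  assumes "a < b" "b \<le> a + 1"
  shows "homeomorphism {a<..<b} (open_arc a b) circ (arc_lift a)"
proof (rule homeomorphismI)
  show "continuous_on {a<..<b} circ"
    unfolding circ_def by (intro continuous_intros)
  show "continuous_on (open_arc a b) (arc_lift a)"
    unfolding arc_lift_def
  proof (intro continuous_intros)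
    fix w assume "w \<in> open_arc a b"
    then obtain y where "a < y" "y < b" "w = circ y"
      by (auto simp: open_arc_def)
    then show "- (w / circ a) \<notin> \<real>\<^sub>\<le>\<^sub>0"
      using assms by (simp add: minus_circ_divide_circ cis_notin_nonpos_Reals)
  qed (auto simp: circ_def)
  show "circ ` {a<..<b} \<subseteq> open_arc a b"
    by (simp add: open_arc_def)
  show "arc_lift a ` open_arc a b \<subseteq> {a<..<b}" "\<And>y. y \<in> {a<..<b} \<Longrightarrow> arc_lift a (circ y) = y"
       "\<And>w. w \<in> open_arc a b \<Longrightarrow> circ (arc_lift a w) = w"
    using assms by (auto simp: open_arc_def arc_lift_circ)
qed

lemma homeomorphism_affine_greaterThanLessThan:
  fixes c d :: real
  assumes "0 < c" "c * a - d = a'" "c * b - d = b'"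
  shows "homeomorphism {a<..<b} {a'<..<b'} (\<lambda>x. c * x - d) (\<lambda>y. (y + d) / c)"
proof (rule homeomorphismI)
  show "(\<lambda>y. (y + d) / c) ` {a'<..<b'} \<subseteq> {a<..<b}"
    using assms by (auto simp: field_simps)
qed (use assms in \<open>auto intro!: continuous_intros\<close>)

definition dyadic_models :: "(real \<times> real) set" where
  "dyadic_models = {(0, 1), (0, 2/3), (1/3, 2/3), (1/3, 1)}"

lemma gen_dyadic_imp_pullback_of_model:
  assumes "gen_dyadic s t"
  shows "\<exists>m. \<exists>(a, b) \<in> dyadic_models. \<exists>k::int. s = (a + k) / 2 ^ m \<and> t = (b + k) / 2 ^ m"
proof -
  from assms obtain m a b g where "s < t" and ab: "(a, b) \<in> dyadic_models"
    and "homeomorphism (open_arc s t) (open_arc a b) (sigma2 ^^ m) g"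
    unfolding gen_dyadic_def dyadic_models_def by blast
  then have "open_arc a b = (sigma2 ^^ m) ` open_arc s t"
    by (simp add: homeomorphism_def)
  also have "\<dots> = circ ` ((\<lambda>x. 2 ^ m * x - 0) ` {s<..<t})"
    by (simp add: open_arc_def image_image sigma2_iterate_circ)
  also have "(\<lambda>x. 2 ^ m * x - 0) ` {s<..<t} = {2 ^ m * s<..<2 ^ m * s + 2 ^ m * (t - s)}"
    by (rule homeomorphism_image1[OF homeomorphism_affine_greaterThanLessThan]) (simp_all add: algebra_simps)
  finally have arcs: "open_arc (2 ^ m * s) (2 ^ m * s + 2 ^ m * (t - s)) = open_arc a (a + (b - a))"
    by (simp add: open_arc_def)
  have "0 < 2 ^ m * (t - s)"
    using \<open>s < t\<close> by simp
  moreover have "0 < b - a" "b - a \<le> 1"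
    using ab by (auto simp: dyadic_models_def)
  ultimately have "2 ^ m * (t - s) = b - a" "2 ^ m * s - a \<in> \<int>"
    using open_arc_eqD[OF arcs] by blast+
  then obtain k :: int where "2 ^ m * s - a = k"
    by (auto elim: Ints_cases)
  then have "s = (a + k) / 2 ^ m" "t = (b + k) / 2 ^ m"
    using \<open>2 ^ m * (t - s) = b - a\<close> by (auto simp: field_simps)
  then show ?thesis
    using ab by blast
qed

lemma gen_dyadic_pullback_of_model:
  fixes k :: int
  assumes ab: "(a, b) \<in> dyadic_models" and s: "s = (a + k) / 2 ^ m" and t: "t = (b + k) / 2 ^ m"
  shows "gen_dyadic s t"
proof -
  have "0 < b - a" "b - a \<le> 1"
    using ab by (auto simp: dyadic_models_def)
  moreover have "t - s = (b - a) / 2 ^ m"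
    using s t by (simp add: field_simps)
  moreover have "0 < (b - a) / 2 ^ m" "(b - a) / 2 ^ m \<le> b - a"
    using \<open>0 < b - a\<close> by (simp_all add: divide_le_eq)
  ultimately have "s < t" "t - s \<le> 1"
    by linarith+
  have "homeomorphism (open_arc s t) {s<..<t} (arc_lift s) circ"
    using \<open>s < t\<close> \<open>t - s \<le> 1\<close> by (simp add: homeomorphism_symD homeomorphism_circ_open_arc)
  moreover have "homeomorphism {s<..<t} {a<..<b} (\<lambda>x. 2 ^ m * x - k) (\<lambda>y. (y + k) / 2 ^ m)"
    using s t by (intro homeomorphism_affine_greaterThanLessThan) simp_all
  moreover have "homeomorphism {a<..<b} (open_arc a b) circ (arc_lift a)"
    using \<open>0 < b - a\<close> \<open>b - a \<le> 1\<close> by (simp add: homeomorphism_circ_open_arc)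
  ultimately obtain g where
    g: "homeomorphism (open_arc s t) (open_arc a b) (circ \<circ> ((\<lambda>x. 2 ^ m * x - k) \<circ> arc_lift s)) g"
    by (blast intro: homeomorphism_compose)
  have "(circ \<circ> ((\<lambda>x. 2 ^ m * x - k) \<circ> arc_lift s)) w = (sigma2 ^^ m) w" if "w \<in> open_arc s t" for w
  proof -
    from that obtain y where "s < y" "y < t" "w = circ y"
      by (auto simp: open_arc_def)
    then show ?thesis
      using \<open>t - s \<le> 1\<close> by (simp add: arc_lift_circ sigma2_iterate_circ circ_eq_iff)
  qed
  then have "homeomorphism (open_arc s t) (open_arc a b) (sigma2 ^^ m) g"
    by (intro homeomorphism_cong[OF g]) auto
  then show ?thesis
    using ab \<open>s < t\<close> \<open>t - s \<le> 1\<close> unfolding gen_dyadic_def dyadic_models_def by blast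
qed

lemma red_pullback:
  fixes k :: int
  assumes "red u"
  shows "red ((u + k) / 2 ^ m)"
proof -
  obtain n where "(sigma2 ^^ n) (circ u) = circ 0"
    using assms by (auto simp: red_def)
  then have "(sigma2 ^^ (n + m)) (circ ((u + k) / 2 ^ m)) = circ 0"
    by (simp add: funpow_add sigma2_iterate_circ_pullback)
  then show ?thesis
    unfolding red_def by blast
qed

lemma blue_pullback:
  fixes k :: int
  assumes "blue u"
  shows "blue ((u + k) / 2 ^ m)"
proof -
  obtain n where "(sigma2 ^^ n) (circ u) \<in> {circ (1/3), circ (2/3)}"
    using assms by (auto simp: blue_def)
  then have "(sigma2 ^^ (n + m)) (circ ((u + k) / 2 ^ m)) \<in> {circ (1/3), circ (2/3)}"
    by (simp add: funpow_add sigma2_iterate_circ_pullback)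
  then show ?thesis
    unfolding blue_def by blast
qed

lemma red_one_half: "red (1/2)"
  unfolding red_def by (rule exI[of _ 1]) (simp add: sigma2_circ circ_eq_iff)

lemma blue_thirds: "blue (1/3)" "blue (2/3)"
  unfolding blue_def by (rule exI[of _ 0], simp)+

lemma sigma2_iterate_two_cycle:
  assumes "z \<in> {circ (1/3), circ (2/3)}"
  shows "(sigma2 ^^ n) z \<in> {circ (1/3), circ (2/3)}"
proof (induction n)
  case (Suc n)
  have "sigma2 (circ (2/3)) = circ (1/3)"
    by (simp add: sigma2_circ circ_eq_iff)
  with Suc show ?case
    by (auto simp: sigma2_circ)
qed (use assms in simp)

lemma red_not_blue:
  assumes "red x"
  shows "\<not> blue x"
proof
  assume "blue x"
  then obtain p where p: "(sigma2 ^^ p) (circ x) \<in> {circ (1/3), circ (2/3)}"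
    by (auto simp: blue_def)
  obtain n where n: "(sigma2 ^^ n) (circ x) = circ 0"
    using assms by (auto simp: red_def)
  have "(sigma2 ^^ (p + n)) (circ x) = circ 0"
    using n by (simp add: funpow_add sigma2_iterate_circ)
  moreover have "(sigma2 ^^ (n + p)) (circ x) \<in> {circ (1/3), circ (2/3)}"
    using sigma2_iterate_two_cycle[OF p, of n] by (simp add: funpow_add)
  moreover have "circ 0 \<notin> {circ (1/3), circ (2/3)}"
    using Ints_nonzero_abs_less1[of "-1/3 :: real"] Ints_nonzero_abs_less1[of "-2/3 :: real"]
    by (auto simp: circ_eq_iff)
  ultimately show False
    by (metis add.commute)
qed

definition dyadic_split :: "(real \<Rightarrow> bool) \<Rightarrow> real \<Rightarrow> real \<Rightarrow> bool" where
  "dyadic_split P s t \<longleftrightarrow> (\<exists>x. s < x \<and> x < t \<and> P x \<and> gen_dyadic s x \<and> gen_dyadic x t)"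

lemma gen_dyadic_pullback:
  fixes k :: int
  assumes "gen_dyadic u v"
  shows "gen_dyadic ((u + k) / 2 ^ m) ((v + k) / 2 ^ m)"
proof -
  obtain n a b j where ab: "(a, b) \<in> dyadic_models"
    and "u = (a + of_int j) / 2 ^ n" "v = (b + of_int j) / 2 ^ n"
    using gen_dyadic_imp_pullback_of_model[OF assms] by blast
  then have "(u + k) / 2 ^ m = (a + of_int (j + 2 ^ n * k)) / 2 ^ (n + m)"
    "(v + k) / 2 ^ m = (b + of_int (j + 2 ^ n * k)) / 2 ^ (n + m)"
    by (simp_all add: field_simps power_add)
  then show ?thesis
    by (intro gen_dyadic_pullback_of_model[OF ab])
qed

lemma dyadic_split_pullback:
  fixes k :: int
  assumes "dyadic_split P u v" "\<And>x. P x \<Longrightarrow> P ((x + k) / 2 ^ m)"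
  shows "dyadic_split P ((u + k) / 2 ^ m) ((v + k) / 2 ^ m)"
proof -
  obtain x where "u < x" "x < v" "P x" "gen_dyadic u x" "gen_dyadic x v"
    using assms(1) by (auto simp: dyadic_split_def)
  then show ?thesis
    unfolding dyadic_split_def
    by (intro exI[of _ "(x + k) / 2 ^ m"]) (simp add: assms(2) gen_dyadic_pullback divide_strict_right_mono)
qed

lemma gen_dyadic_models: "(a, b) \<in> dyadic_models \<Longrightarrow> gen_dyadic a b"
  using gen_dyadic_pullback_of_model[where k=0 and m=0] by simp

lemma gen_dyadic_split_pieces:
  "gen_dyadic 0 (1/2)" "gen_dyadic (1/2) 1" "gen_dyadic (1/3) (1/2)" "gen_dyadic (1/2) (2/3)"
  "gen_dyadic 0 (1/3)" "gen_dyadic (2/3) 1"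
proof -
  show "gen_dyadic 0 (1/2)"
    by (rule gen_dyadic_pullback_of_model[where a=0 and b=1 and m=1 and k=0]) (simp_all add: dyadic_models_def)
  show "gen_dyadic (1/2) 1"
    by (rule gen_dyadic_pullback_of_model[where a=0 and b=1 and m=1 and k=1]) (simp_all add: dyadic_models_def)
  show "gen_dyadic (1/3) (1/2)"
    by (rule gen_dyadic_pullback_of_model[where a="1/3" and b=1 and m=2 and k=1]) (simp_all add: dyadic_models_def)
  show "gen_dyadic (1/2) (2/3)"
    by (rule gen_dyadic_pullback_of_model[where a=0 and b="2/3" and m=2 and k=2]) (simp_all add: dyadic_models_def)
  show "gen_dyadic 0 (1/3)"
    by (rule gen_dyadic_pullback_of_model[where a=0 and b="2/3" and m=1 and k=0]) (simp_all add: dyadic_models_def)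
  show "gen_dyadic (2/3) 1"
    by (rule gen_dyadic_pullback_of_model[where a="1/3" and b=1 and m=1 and k=1]) (simp_all add: dyadic_models_def)
qed

lemma dyadic_split_red_model:
  assumes "(a, b) \<in> dyadic_models"
  shows "dyadic_split red a b"
proof -
  have "\<forall>(a, b) \<in> dyadic_models. dyadic_split red a b"
    using red_one_half gen_dyadic_split_pieces unfolding dyadic_models_def dyadic_split_def
    by (auto intro!: exI[of _ "1/2"])
  then show ?thesis
    using assms by blast
qed

lemma dyadic_split_blue_model:
  assumes "(a, b) \<in> dyadic_models" "(a, b) \<noteq> (1/3, 2/3)"
  shows "dyadic_split blue a b"
proof -
  note facts = blue_thirds gen_dyadic_split_pieces gen_dyadic_models dyadic_models_def
  have "dyadic_split blue 0 1" "dyadic_split blue (1/3) 1"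
    unfolding dyadic_split_def by (intro exI[of _ "2/3"]; simp add: facts)+
  moreover have "dyadic_split blue 0 (2/3)"
    unfolding dyadic_split_def by (intro exI[of _ "1/3"]) (simp add: facts)
  ultimately have "\<forall>(a, b) \<in> dyadic_models. (a, b) \<noteq> (1/3, 2/3) \<longrightarrow> dyadic_split blue a b"
    unfolding dyadic_models_def by simp
  then show ?thesis
    using assms by blast
qed

theorem lemma7p2:
  fixes s t :: real
  assumes "gen_dyadic s t"
  shows "(\<exists>x. s < x \<and> x < t \<and> red x \<and> gen_dyadic s x \<and> gen_dyadic x t)
       \<and> ((red s \<or> red t) \<longrightarrow>
            (\<exists>x. s < x \<and> x < t \<and> blue x \<and> gen_dyadic s x \<and> gen_dyadic x t))"
proof -
  obtain m a b k where ab: "(a, b) \<in> dyadic_models"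
    and s: "s = (a + of_int k) / 2 ^ m" and t: "t = (b + of_int k) / 2 ^ m"
    using gen_dyadic_imp_pullback_of_model[OF assms] by blast
  have "dyadic_split red s t"
    unfolding s t using ab by (intro dyadic_split_pullback dyadic_split_red_model red_pullback)
  moreover have "dyadic_split blue s t" if "red s \<or> red t"
  proof -
    have "(a, b) \<noteq> (1/3, 2/3)"
    proof
      assume "(a, b) = (1/3, 2/3)"
      then have "a = 1/3" "b = 2/3"
        by simp_all
      then have "blue s" "blue t"
        unfolding s t by (simp_all only: blue_pullback blue_thirds)
      with that show False
        using red_not_blue by blast
    qed
    then show ?thesis
      unfolding s t using ab by (intro dyadic_split_pullback dyadic_split_blue_model blue_pullback)
  qed
  ultimately show ?thesis
    by (simp add: dyadic_split_def)
qed

end
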